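(* Let $\gamma:[0,1]\to\mathbb{R}^2$ be a $C^1$ curve of constant speed $c>0$ with $\gamma(0)\neq\gamma(1)$, whose turning angle function $\theta$ satisfies $\theta(1)-\theta(0)=2\pi m$ with $0\neq m\in\mathbb{Z}$. Let $\sigma$ be a permutation of $\{1,2,3\}$. Then $\gamma$ is $(3,1)$-rearrangeable with respect to $\sigma$ if and only if $\sigma$ is a transposition.
   Context: A turning angle function is a continuous $\theta$ with $\gamma'(s)=c(\cos\theta(s),\sin\theta(s))$. Concatenation $\alpha*\beta$ of two $C^1$ planar curves of the same constant speed ($\alpha$ on $[a_1,b_1]$, $\beta$ on $[a_2,b_2]$) is the curve equal to $\alpha(s+a_1)$ for $s\le b_1-a_1$ and to $T(\beta(s-(b_1-a_1)+a_2))$ afterwards, where $T$ is the orientation-preserving rigid motion sending $\beta(a_2)$ to $\alpha(b_1)$ and the unit tangent of $\beta$ at $a_2$ to that of $\alpha$ at $b_1$; it is associative. For cuts $0\le c_1\le c_2\le 1$ let $\gamma_1,\gamma_2,\gamma_3$ be the restrictions of $\gamma$ to $[0,c_1],[c_1,c_2],[c_2,1]$ (degenerate arcs are points carrying the tangent direction of $\gamma$), and for $\sigma\in S_3$ let $r_{\sigma,C}:=\gamma_{\sigma(1)}*\gamma_{\sigma(2)}*\gamma_{\sigma(3)}$ over $[0,1]$. $\gamma$ is $(3,1)$-rearrangeable with respect to $\sigma$ if there exist such cuts $C=(c_1,c_2)$ with $r_{\sigma,C}$ a closed $C^1$ curve (end point equals start point and the tangents there agree). *)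

theory Defs
  imports "HOL-Analysis.Analysis" "HOL-Combinatorics.Transposition" "HOL-Combinatorics.Permutations"
begin

text \<open>Planar curves are modelled as maps into the complex plane (= R^2).
An arc is a tuple (f, f', a, b): the curve f on the parameter interval [a,b]
together with its tangent (velocity) field f'.  A degenerate arc (a = b) is a
point carrying a tangent direction.\<close>

type_synonym arc = "(real \<Rightarrow> complex) \<times> (real \<Rightarrow> complex) \<times> real \<times> real"

text \<open>The orientation-preserving rigid motion T is
z \<mapsto> alpha(b1) + u (z - beta(a2)) where the unit complex number u rotates the
unit tangent of beta at a2 onto the unit tangent of alpha at b1.\<close>

definition concat_arc :: "arc \<Rightarrow> arc \<Rightarrow> arc" where
  "concat_arc A B =
    (case A of (f, f', a1, b1) \<Rightarrow> case B of (g, g', a2, b2) \<Rightarrow>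
      (let u = sgn (f' b1) / sgn (g' a2);
           T = (\<lambda>z. f b1 + u * (z - g a2))
       in ((\<lambda>s. if s \<le> b1 - a1 then f (s + a1) else T (g (s - (b1 - a1) + a2))),
           (\<lambda>s. if s \<le> b1 - a1 then f' (s + a1) else u * g' (s - (b1 - a1) + a2)),
           0, (b1 - a1) + (b2 - a2))))"

definition tangent01 :: "(real \<Rightarrow> complex) \<Rightarrow> real \<Rightarrow> complex" where
  "tangent01 \<gamma> s = vector_derivative \<gamma> (at s within {0..1})"

definition piece :: "(real \<Rightarrow> complex) \<Rightarrow> real \<Rightarrow> real \<Rightarrow> nat \<Rightarrow> arc" where
  "piece \<gamma> c1 c2 i =
     (if i = 1 then (\<gamma>, tangent01 \<gamma>, 0, c1)
      else if i = 2 then (\<gamma>, tangent01 \<gamma>, c1, c2)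
      else (\<gamma>, tangent01 \<gamma>, c2, 1))"

definition rearr :: "(real \<Rightarrow> complex) \<Rightarrow> (nat \<Rightarrow> nat) \<Rightarrow> real \<Rightarrow> real \<Rightarrow> arc" where
  "rearr \<gamma> \<sigma> c1 c2 =
     concat_arc (concat_arc (piece \<gamma> c1 c2 (\<sigma> 1)) (piece \<gamma> c1 c2 (\<sigma> 2)))
                (piece \<gamma> c1 c2 (\<sigma> 3))"

definition closed_C1_arc :: "arc \<Rightarrow> bool" where
  "closed_C1_arc A = (case A of (h, h', a, b) \<Rightarrow> h 0 = h 1 \<and> sgn (h' 0) = sgn (h' 1))"

definition rearrangeable_3_1 :: "(real \<Rightarrow> complex) \<Rightarrow> (nat \<Rightarrow> nat) \<Rightarrow> bool" where
  "rearrangeable_3_1 \<gamma> \<sigma> =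
     (\<exists>c1 c2. 0 \<le> c1 \<and> c1 \<le> c2 \<and> c2 \<le> 1 \<and> closed_C1_arc (rearr \<gamma> \<sigma> c1 c2))"

definition is_transposition3 :: "(nat \<Rightarrow> nat) \<Rightarrow> bool" where
  "is_transposition3 \<sigma> =
     (\<exists>a b. a \<in> {1,2,3} \<and> b \<in> {1,2,3} \<and> a \<noteq> b \<and> \<sigma> = Transposition.transpose a b)"

end

theory Submission
  imports Defs
begin

text \<open>Whatever sigma and the cuts, the tangent of r_{sigma,C} turns in total by
  theta(1) - theta(0), a multiple of 2 pi, so it always closes up, and r_{sigma,C} is closed iff
  its closing gap (end point minus start point) vanishes. For the identity and the two 3-cycles
  the rotations of the rigid motions cancel and the gap is the constant gamma(1) - gamma(0), which
  is nonzero. For a transposition the gap is a continuous function on the triangle of cuts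
  0 <= c1 <= c2 <= 1; on two of its edges it equals gamma(1) - gamma(0), while along the third
  its argument changes by +-(theta(1) - theta(0)) = +-2 pi m, which is nonzero. A nowhere
  vanishing function on the contractible triangle has a continuous logarithm, so the argument
  changes along two edges would add up to the change along the third; hence the gap has a zero.\<close>

lemma exp_eq_imp_diff_const:
  fixes f g :: "'a::topological_space \<Rightarrow> complex"
  assumes S: "connected S" and f: "continuous_on S f" and g: "continuous_on S g"
    and exp_fg: "\<And>x. x \<in> S \<Longrightarrow> exp (f x) = exp (g x)" and "a \<in> S" "b \<in> S"
  shows "f a - g a = f b - g b"
proof -
  have multiple: "\<exists>n::int. f x - g x = of_int n * (2 * pi * \<i>)" if x: "x \<in> S" for x
  proof -
    obtain n :: int where "f x = g x + of_real (of_int (2 * n) * pi) * \<i>"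
      using exp_fg[OF x] exp_eq by blast
    then show ?thesis by (intro exI[of _ n]) (simp add: algebra_simps)
  qed
  have "(\<lambda>x. f x - g x) constant_on S"
  proof (rule continuous_discrete_range_constant[OF S])
    show "continuous_on S (\<lambda>x. f x - g x)" using f g by (intro continuous_intros)
    fix x assume "x \<in> S"
    then obtain n where n: "f x - g x = of_int n * (2 * pi * \<i>)" using multiple by blast
    have "2 * pi \<le> norm ((f y - g y) - (f x - g x))" if "y \<in> S" "f y - g y \<noteq> f x - g x" for y
    proof -
      obtain k where k: "f y - g y = of_int k * (2 * pi * \<i>)" using multiple \<open>y \<in> S\<close> by blast
      with n that have "k \<noteq> n" by auto
      then have "1 \<le> \<bar>real_of_int (k - n)\<bar>" by linarith
      then have "2 * pi * 1 \<le> 2 * pi * \<bar>real_of_int (k - n)\<bar>" by (intro mult_left_mono) auto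
      also have "\<dots> = norm ((f y - g y) - (f x - g x))"
        by (simp add: k n norm_mult flip: left_diff_distrib of_int_diff)
      finally show ?thesis by simp
    qed
    then show "\<exists>e>0. \<forall>y. y \<in> S \<and> f y - g y \<noteq> f x - g x \<longrightarrow>
        e \<le> norm ((f y - g y) - (f x - g x))"
      by (intro exI[of _ "2 * pi"]) auto
  qed
  then show ?thesis using assms(5,6) by (auto simp: constant_on_def)
qed

lemma exp_eq_cis_imp_diff:
  fixes g :: "real \<Rightarrow> complex" and \<phi> :: "real \<Rightarrow> real"
  assumes "a \<le> b" "continuous_on {a..b} g" "continuous_on {a..b} \<phi>" "D \<noteq> 0"
    and "\<And>t. t \<in> {a..b} \<Longrightarrow> exp (g t) = cis (\<phi> t) * D"
  shows "g b - g a = \<i> * of_real (\<phi> b - \<phi> a)"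
proof -
  have "g a - (\<i> * of_real (\<phi> a) + Ln D) = g b - (\<i> * of_real (\<phi> b) + Ln D)"
  proof (rule exp_eq_imp_diff_const[of "{a..b}"])
    show "continuous_on {a..b} (\<lambda>t. \<i> * of_real (\<phi> t) + Ln D)"
      using assms(3) by (intro continuous_intros)
  qed (use assms in \<open>auto simp: exp_add cis_conv_exp\<close>)
  then show ?thesis by (simp add: algebra_simps)
qed

text \<open>A continuous logarithm of F exists on the contractible set, and along each path it
  changes by i times the change of the argument.\<close>

lemma arg_changes_add_on_contractible:
  fixes F :: "'a::real_normed_vector \<Rightarrow> complex" and \<phi> \<psi> \<omega> :: "real \<Rightarrow> real"
  assumes S: "contractible S" "continuous_on S F" "\<And>x. x \<in> S \<Longrightarrow> F x \<noteq> 0" and "D \<noteq> 0"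
    and paths: "path p" "path q" "path r" "path_image p \<subseteq> S" "path_image q \<subseteq> S" "path_image r \<subseteq> S"
    and ends: "pathfinish p = pathstart q" "pathstart r = pathstart p" "pathfinish r = pathfinish q"
    and args: "continuous_on {0..1} \<phi>" "continuous_on {0..1} \<psi>" "continuous_on {0..1} \<omega>"
    and "\<And>t. t \<in> {0..1} \<Longrightarrow> F (p t) = cis (\<phi> t) * D"
        "\<And>t. t \<in> {0..1} \<Longrightarrow> F (q t) = cis (\<psi> t) * D"
        "\<And>t. t \<in> {0..1} \<Longrightarrow> F (r t) = cis (\<omega> t) * D"
  shows "(\<phi> 1 - \<phi> 0) + (\<psi> 1 - \<psi> 0) = \<omega> 1 - \<omega> 0"
proof -
  obtain L where L: "continuous_on S L" "\<And>x. x \<in> S \<Longrightarrow> F x = exp (L x)"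
    using continuous_logarithm_on_contractible S by metis
  have log_change: "L (pathfinish g) - L (pathstart g) = \<i> * of_real (\<alpha> 1 - \<alpha> 0)"
    if "path g" "path_image g \<subseteq> S" "continuous_on {0..1} \<alpha>"
      and F_g: "\<And>t. t \<in> {0..1} \<Longrightarrow> F (g t) = cis (\<alpha> t) * D" for g \<alpha>
  proof -
    have "(L \<circ> g) 1 - (L \<circ> g) 0 = \<i> * of_real (\<alpha> 1 - \<alpha> 0)"
    proof (rule exp_eq_cis_imp_diff)
      show "continuous_on {0..1} (L \<circ> g)"
        using that(1,2) L(1) unfolding path_def path_image_def by (metis continuous_on_compose continuous_on_subset)
      show "exp ((L \<circ> g) t) = cis (\<alpha> t) * D" if "t \<in> {0..1}" for t
      proof -
        have "g t \<in> S" using \<open>path_image g \<subseteq> S\<close> that by (auto simp: path_image_def)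
        then show ?thesis using L(2) F_g[OF that] by (metis comp_apply)
      qed
    qed (use that \<open>D \<noteq> 0\<close> in auto)
    then show ?thesis by (simp add: pathstart_def pathfinish_def)
  qed
  have "\<i> * of_real (\<omega> 1 - \<omega> 0) = L (pathfinish r) - L (pathstart r)"
    using log_change[of r \<omega>] assms by simp
  also have "\<dots> = (L (pathfinish p) - L (pathstart p)) + (L (pathfinish q) - L (pathstart q))"
    using ends by simp
  also have "\<dots> = \<i> * of_real ((\<phi> 1 - \<phi> 0) + (\<psi> 1 - \<psi> 0))"
    using log_change[of p \<phi>] log_change[of q \<psi>] assms by (simp add: distrib_left)
  finally show ?thesis by (metis mult_cancel_left complex_i_not_zero of_real_eq_iff)
qed

lemma sgn_mult_unit: "norm (u :: complex) = 1 \<Longrightarrow> sgn (u * z) = u * sgn z"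
  by (simp add: sgn_div_norm norm_mult)

lemma concat_arc_endpoints:
  fixes f f' g g' :: "real \<Rightarrow> complex"
  assumes "a1 \<le> b1" "a2 \<le> b2" "f' b1 \<noteq> 0" "g' a2 \<noteq> 0"
  defines "u \<equiv> sgn (f' b1) / sgn (g' a2)" and "l \<equiv> (b1 - a1) + (b2 - a2)"
  obtains F F' where "concat_arc (f, f', a1, b1) (g, g', a2, b2) = (F, F', 0, l)"
    and "F 0 = f a1" "F' 0 = f' a1"
    and "F l = f b1 + u * (g b2 - g a2)" "sgn (F' l) = u * sgn (g' b2)"
proof
  let ?F = "\<lambda>s. if s \<le> b1 - a1 then f (s + a1) else f b1 + u * (g (s - (b1 - a1) + a2) - g a2)"
  let ?F' = "\<lambda>s. if s \<le> b1 - a1 then f' (s + a1) else u * g' (s - (b1 - a1) + a2)"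
  show "concat_arc (f, f', a1, b1) (g, g', a2, b2) = (?F, ?F', 0, l)"
    unfolding u_def l_def by (simp add: concat_arc_def Let_def)
  show "?F 0 = f a1" "?F' 0 = f' a1" "?F l = f b1 + u * (g b2 - g a2)"
    using assms(1,2) by (auto simp: l_def)
  have "norm u = 1" using assms(3,4) by (simp add: u_def norm_divide norm_sgn)
  show "sgn (?F' l) = u * sgn (g' b2)"
  proof (cases "a2 = b2")
    case True
    then show ?thesis using assms(1,3,4) by (simp add: l_def u_def sgn_zero_iff)
  next
    case False
    then show ?thesis using \<open>norm u = 1\<close> assms(1,2) by (simp add: l_def sgn_mult_unit)
  qed
qed

lemma closed_C1_arc_concat3_iff:
  fixes f f' g g' h h' :: "real \<Rightarrow> complex"
  assumes "a1 \<le> b1" "a2 \<le> b2" "a3 \<le> b3" "(b1 - a1) + (b2 - a2) + (b3 - a3) = 1"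
    and "f' b1 \<noteq> 0" "g' a2 \<noteq> 0" "g' b2 \<noteq> 0" "h' a3 \<noteq> 0"
  defines "u \<equiv> sgn (f' b1) / sgn (g' a2)" and "v \<equiv> sgn (g' b2) / sgn (h' a3)"
  shows "closed_C1_arc (concat_arc (concat_arc (f, f', a1, b1) (g, g', a2, b2)) (h, h', a3, b3))
    \<longleftrightarrow> (f b1 - f a1) + u * (g b2 - g a2) + u * v * (h b3 - h a3) = 0
        \<and> sgn (f' a1) = u * v * sgn (h' b3)"
proof -
  obtain F F' where FF': "concat_arc (f, f', a1, b1) (g, g', a2, b2) = (F, F', 0, (b1 - a1) + (b2 - a2))"
    "F 0 = f a1" "F' 0 = f' a1"
    "F ((b1 - a1) + (b2 - a2)) = f b1 + u * (g b2 - g a2)"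
    "sgn (F' ((b1 - a1) + (b2 - a2))) = u * sgn (g' b2)"
    using concat_arc_endpoints[of a1 b1 a2 b2 f' g' f g] assms(1,2,5,6) unfolding u_def by blast
  have "norm u = 1" using assms(5,6) by (simp add: u_def norm_divide norm_sgn)
  then have "F' ((b1 - a1) + (b2 - a2)) \<noteq> 0"
    using FF'(5) assms(7) by (auto simp: sgn_zero_iff)
  moreover have "sgn (F' ((b1 - a1) + (b2 - a2))) / sgn (h' a3) = u * v"
    using FF'(5) by (simp add: v_def)
  ultimately obtain H H' where HH': "concat_arc (F, F', 0, (b1 - a1) + (b2 - a2)) (h, h', a3, b3) = (H, H', 0, 1)"
    "H 0 = F 0" "H' 0 = F' 0"
    "H 1 = F ((b1 - a1) + (b2 - a2)) + u * v * (h b3 - h a3)"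
    "sgn (H' 1) = u * v * sgn (h' b3)"
    using concat_arc_endpoints[of 0 "(b1 - a1) + (b2 - a2)" a3 b3 F' h' F h] assms(1-4,8)
    by (metis add_increasing diff_ge_0_iff_ge diff_zero)
  have "H 1 - H 0 = (f b1 - f a1) + u * (g b2 - g a2) + u * v * (h b3 - h a3)"
    using FF'(2,4) HH'(2,4) by simp
  then have "H 0 = H 1 \<longleftrightarrow> (f b1 - f a1) + u * (g b2 - g a2) + u * v * (h b3 - h a3) = 0"
    by (metis eq_iff_diff_eq_0)
  then show ?thesis
    unfolding FF'(1) HH'(1) closed_C1_arc_def using FF'(3) HH'(3,5) by auto
qed

definition cut_start :: "real \<Rightarrow> real \<Rightarrow> nat \<Rightarrow> real" where
  "cut_start c1 c2 i = (if i = 1 then 0 else if i = 2 then c1 else c2)"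

definition cut_end :: "real \<Rightarrow> real \<Rightarrow> nat \<Rightarrow> real" where
  "cut_end c1 c2 i = (if i = 1 then c1 else if i = 2 then c2 else 1)"

definition cuts :: "(real \<times> real) set" where
  "cuts = {(c1, c2). 0 \<le> c1 \<and> c1 \<le> c2 \<and> c2 \<le> 1}"

lemma piece_eq_cut: "piece \<gamma> c1 c2 i = (\<gamma>, tangent01 \<gamma>, cut_start c1 c2 i, cut_end c1 c2 i)"
  by (simp add: piece_def cut_start_def cut_end_def)

lemma cut_points_in_unit_interval:
  assumes "(c1, c2) \<in> cuts"
  shows "cut_start c1 c2 i \<in> {0..1}" "cut_end c1 c2 i \<in> {0..1}" "cut_start c1 c2 i \<le> cut_end c1 c2 i"
  using assms by (auto simp: cuts_def cut_start_def cut_end_def)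

lemma sum_cut_lengths_permute:
  fixes g :: "real \<Rightarrow> real"
  assumes "\<sigma> permutes {1, 2, 3}"
  shows "(\<Sum>k\<in>{1, 2, 3}. g (cut_end c1 c2 (\<sigma> k)) - g (cut_start c1 c2 (\<sigma> k))) = g 1 - g 0"
proof -
  have "(\<Sum>k\<in>{1, 2, 3}. g (cut_end c1 c2 (\<sigma> k)) - g (cut_start c1 c2 (\<sigma> k)))
      = (\<Sum>i\<in>{1, 2, 3}. g (cut_end c1 c2 i) - g (cut_start c1 c2 i))"
    using sum.permute[OF assms, of "\<lambda>i. g (cut_end c1 c2 i) - g (cut_start c1 c2 i)"] by simp
  also have "\<dots> = g 1 - g 0"
    by (simp add: cut_start_def cut_end_def algebra_simps)
  finally show ?thesis .
qed

lemma convex_cuts: "convex cuts"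
proof -
  have "cuts = {x. inner (-1, 0) x \<le> 0} \<inter> {x. inner (1, -1) x \<le> 0} \<inter> {x. inner (0, 1) x \<le> (1::real)}"
    by (auto simp: cuts_def)
  then show ?thesis by (metis convex_Int convex_halfspace_le)
qed

lemma permutes3_values:
  assumes "\<sigma> permutes {1, 2, 3 :: nat}"
  shows "(\<sigma> 1, \<sigma> 2, \<sigma> 3) \<in> {(1, 2, 3), (2, 3, 1), (3, 1, 2), (2, 1, 3), (1, 3, 2), (3, 2, 1)}"
proof -
  have "\<sigma> 1 \<in> {1, 2, 3}" "\<sigma> 2 \<in> {1, 2, 3}" "\<sigma> 3 \<in> {1, 2, 3}"
    using permutes_in_image[OF assms] by auto
  then have "\<sigma> 1 = 1 \<or> \<sigma> 1 = 2 \<or> \<sigma> 1 = 3" "\<sigma> 2 = 1 \<or> \<sigma> 2 = 2 \<or> \<sigma> 2 = 3"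
    "\<sigma> 3 = 1 \<or> \<sigma> 3 = 2 \<or> \<sigma> 3 = 3" by simp_all
  moreover have "\<sigma> 1 \<noteq> \<sigma> 2" "\<sigma> 1 \<noteq> \<sigma> 3" "\<sigma> 2 \<noteq> \<sigma> 3"
    by (simp_all add: permutes_inj[OF assms, THEN inj_eq])
  ultimately show ?thesis by (elim disjE) simp_all
qed

lemma is_transposition3_iff:
  assumes "\<sigma> permutes {1, 2, 3 :: nat}"
  shows "is_transposition3 \<sigma> \<longleftrightarrow> (\<sigma> 1, \<sigma> 2, \<sigma> 3) \<in> {(2, 1, 3), (1, 3, 2), (3, 2, 1)}"
proof
  assume "is_transposition3 \<sigma>"
  then obtain a b where "a \<in> {1, 2, 3}" "b \<in> {1, 2, 3}" "a \<noteq> b" "\<sigma> = Transposition.transpose a b"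
    unfolding is_transposition3_def by blast
  then show "(\<sigma> 1, \<sigma> 2, \<sigma> 3) \<in> {(2, 1, 3), (1, 3, 2), (3, 2, 1)}"
    by (auto simp: transpose_def)
next
  assume triple: "(\<sigma> 1, \<sigma> 2, \<sigma> 3) \<in> {(2, 1, 3), (1, 3, 2), (3, 2, 1)}"
  have transposition: "is_transposition3 \<sigma>"
    if "\<forall>x\<in>{1, 2, 3}. \<sigma> x = Transposition.transpose a b x" "a \<in> {1, 2, 3}" "b \<in> {1, 2, 3}" "a \<noteq> b" for a b
  proof -
    have "\<sigma> x = Transposition.transpose a b x" for x
      using that permutes_not_in[OF assms, of x] by (cases "x \<in> {1, 2, 3}") (auto simp: transpose_def)
    then show ?thesis using that(2-4) unfolding is_transposition3_def by blast
  qed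
  from triple consider "\<sigma> 1 = 2" "\<sigma> 2 = 1" "\<sigma> 3 = 3" | "\<sigma> 1 = 1" "\<sigma> 2 = 3" "\<sigma> 3 = 2"
    | "\<sigma> 1 = 3" "\<sigma> 2 = 2" "\<sigma> 3 = 1"
    by auto
  then show "is_transposition3 \<sigma>"
  proof cases
    case 1
    then show ?thesis by (intro transposition[of 1 2]) auto
  next
    case 2
    then show ?thesis by (intro transposition[of 2 3]) auto
  next
    case 3
    then show ?thesis by (intro transposition[of 1 3]) auto
  qed
qed

locale turning_curve =
  fixes \<gamma> \<gamma>' :: "real \<Rightarrow> complex" and \<theta> :: "real \<Rightarrow> real" and c :: real
  assumes deriv: "\<And>s. s \<in> {0..1} \<Longrightarrow> (\<gamma> has_vector_derivative \<gamma>' s) (at s within {0..1})"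
    and c_pos: "c > 0"
    and theta_cont: "continuous_on {0..1} \<theta>"
    and theta: "\<And>s. s \<in> {0..1} \<Longrightarrow> \<gamma>' s = complex_of_real c * cis (\<theta> s)"
    and open_ends: "\<gamma> 0 \<noteq> \<gamma> 1"
    and closed_tangent: "cis (\<theta> 1) = cis (\<theta> 0)"
begin

lemma sgn_tangent01: "s \<in> {0..1} \<Longrightarrow> sgn (tangent01 \<gamma> s) = cis (\<theta> s)"
proof -
  assume s: "s \<in> {0..1}"
  have "tangent01 \<gamma> s = \<gamma>' s"
    unfolding tangent01_def using deriv[OF s] s by (intro vector_derivative_within_closed_interval) auto
  then show ?thesis
    using theta[OF s] c_pos by (simp add: sgn_mult sgn_of_real)
qed

lemma continuous_on_curve: "continuous_on {0..1} \<gamma>"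
  using deriv has_vector_derivative_continuous continuous_on_eq_continuous_within by blast

lemma cis_turning: "cis (\<theta> 1 - x) = cis (\<theta> 0 - x)" "cis (x - \<theta> 1) = cis (x - \<theta> 0)"
  using closed_tangent by (simp_all flip: cis_divide)

text \<open>The end point of r_{sigma,C} minus its start point: the chords of the three pieces,
  each rotated by the accumulated turns of the rigid motions at the junctions.\<close>

definition closing_gap :: "(nat \<Rightarrow> nat) \<Rightarrow> real \<Rightarrow> real \<Rightarrow> complex" where
  "closing_gap \<sigma> c1 c2 =
    (let a = cut_start c1 c2 \<circ> \<sigma>; b = cut_end c1 c2 \<circ> \<sigma>
     in (\<gamma> (b 1) - \<gamma> (a 1)) + cis (\<theta> (b 1) - \<theta> (a 2)) * (\<gamma> (b 2) - \<gamma> (a 2))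
        + cis (\<theta> (b 1) - \<theta> (a 2)) * cis (\<theta> (b 2) - \<theta> (a 3)) * (\<gamma> (b 3) - \<gamma> (a 3)))"

lemma closed_rearr_iff_closing_gap:
  assumes \<sigma>: "\<sigma> permutes {1, 2, 3}" and C: "(c1, c2) \<in> cuts"
  shows "closed_C1_arc (rearr \<gamma> \<sigma> c1 c2) \<longleftrightarrow> closing_gap \<sigma> c1 c2 = 0"
proof -
  define a where "a = cut_start c1 c2 \<circ> \<sigma>"
  define b where "b = cut_end c1 c2 \<circ> \<sigma>"
  have ab: "a k \<in> {0..1}" "b k \<in> {0..1}" "a k \<le> b k" for k
    using cut_points_in_unit_interval[OF C] by (simp_all add: a_def b_def)
  have length: "(b 1 - a 1) + (b 2 - a 2) + (b 3 - a 3) = 1"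
    using sum_cut_lengths_permute[OF \<sigma>, of id c1 c2] by (simp add: a_def b_def)
  have turn:
    "(\<theta> (b 1) - \<theta> (a 1)) + (\<theta> (b 2) - \<theta> (a 2)) + (\<theta> (b 3) - \<theta> (a 3)) = \<theta> 1 - \<theta> 0"
    using sum_cut_lengths_permute[OF \<sigma>, of \<theta> c1 c2] by (simp add: a_def b_def)
  have rotation: "sgn (tangent01 \<gamma> x) / sgn (tangent01 \<gamma> y) = cis (\<theta> x - \<theta> y)"
    if "x \<in> {0..1}" "y \<in> {0..1}" for x y
    using that by (simp add: sgn_tangent01 cis_divide)
  have nonzero: "tangent01 \<gamma> x \<noteq> 0" if "x \<in> {0..1}" for x
    using sgn_tangent01[OF that] by (metis cis_neq_zero sgn_zero)
  have "(\<theta> (b 1) - \<theta> (a 2)) + (\<theta> (b 2) - \<theta> (a 3)) + \<theta> (b 3) = \<theta> 1 - (\<theta> 0 - \<theta> (a 1))"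
    using turn by linarith
  then have "cis (\<theta> (b 1) - \<theta> (a 2)) * cis (\<theta> (b 2) - \<theta> (a 3)) * cis (\<theta> (b 3))
      = cis (\<theta> 1 - (\<theta> 0 - \<theta> (a 1)))"
    unfolding cis_mult by (rule arg_cong)
  also have "\<dots> = cis (\<theta> (a 1))"
    by (simp add: cis_turning)
  finally have tangents: "sgn (tangent01 \<gamma> (a 1)) =
      cis (\<theta> (b 1) - \<theta> (a 2)) * cis (\<theta> (b 2) - \<theta> (a 3)) * sgn (tangent01 \<gamma> (b 3))"
    using ab by (simp add: sgn_tangent01)
  have pieces: "rearr \<gamma> \<sigma> c1 c2 = concat_arc (concat_arc (\<gamma>, tangent01 \<gamma>, a 1, b 1)
      (\<gamma>, tangent01 \<gamma>, a 2, b 2)) (\<gamma>, tangent01 \<gamma>, a 3, b 3)"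
    by (simp add: rearr_def piece_eq_cut a_def b_def)
  show ?thesis
    unfolding pieces closing_gap_def Let_def a_def[symmetric] b_def[symmetric]
    by (subst closed_C1_arc_concat3_iff) (use ab length nonzero tangents in \<open>simp_all add: rotation\<close>)
qed

lemma rearrangeable_iff_closing_gap:
  assumes "\<sigma> permutes {1, 2, 3}"
  shows "rearrangeable_3_1 \<gamma> \<sigma> \<longleftrightarrow> (\<exists>(c1, c2) \<in> cuts. closing_gap \<sigma> c1 c2 = 0)"
  using closed_rearr_iff_closing_gap[OF assms] by (auto simp: rearrangeable_3_1_def cuts_def)

lemma closing_gap_cyclic:
  assumes "(\<sigma> 1, \<sigma> 2, \<sigma> 3) \<in> {(1, 2, 3), (2, 3, 1), (3, 1, 2)}"
  shows "closing_gap \<sigma> c1 c2 = \<gamma> 1 - \<gamma> 0"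
  using assms by (auto simp: closing_gap_def cut_start_def cut_end_def cis_turning)

lemma continuous_on_closing_gap: "continuous_on cuts (\<lambda>p. closing_gap \<sigma> (fst p) (snd p))"
proof -
  have cut_comp: "continuous_on cuts (\<lambda>p. h (cut_start (fst p) (snd p) i))"
    "continuous_on cuts (\<lambda>p. h (cut_end (fst p) (snd p) i))"
    if "continuous_on {0..1} h" for h :: "real \<Rightarrow> 'a::topological_space" and i
  proof -
    have "continuous_on cuts (\<lambda>p. cut_start (fst p) (snd p) i)"
      "continuous_on cuts (\<lambda>p. cut_end (fst p) (snd p) i)"
      by (cases "i = 1"; cases "i = 2"; simp add: cut_start_def cut_end_def continuous_intros)+
    then show "continuous_on cuts (\<lambda>p. h (cut_start (fst p) (snd p) i))"
      "continuous_on cuts (\<lambda>p. h (cut_end (fst p) (snd p) i))"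
      using cut_points_in_unit_interval by (auto intro!: continuous_on_compose2[OF that])
  qed
  show ?thesis
    unfolding closing_gap_def Let_def comp_def
    by (intro continuous_intros cut_comp continuous_on_curve theta_cont)
qed

lemma closing_gap_has_zero:
  assumes args: "continuous_on {0..1} \<phi>" "continuous_on {0..1} \<psi>" "continuous_on {0..1} \<omega>"
    and edges: "\<And>t. t \<in> {0..1} \<Longrightarrow> closing_gap \<sigma> 0 t = cis (\<phi> t) * (\<gamma> 1 - \<gamma> 0)"
      "\<And>t. t \<in> {0..1} \<Longrightarrow> closing_gap \<sigma> t 1 = cis (\<psi> t) * (\<gamma> 1 - \<gamma> 0)"
      "\<And>t. t \<in> {0..1} \<Longrightarrow> closing_gap \<sigma> t t = cis (\<omega> t) * (\<gamma> 1 - \<gamma> 0)"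
    and winding: "(\<phi> 1 - \<phi> 0) + (\<psi> 1 - \<psi> 0) \<noteq> \<omega> 1 - \<omega> 0"
  shows "\<exists>(c1, c2) \<in> cuts. closing_gap \<sigma> c1 c2 = 0"
proof (rule ccontr)
  assume "\<not> ?thesis"
  then have "closing_gap \<sigma> (fst p) (snd p) \<noteq> 0" if "p \<in> cuts" for p
    using that by auto
  then have "(\<phi> 1 - \<phi> 0) + (\<psi> 1 - \<psi> 0) = \<omega> 1 - \<omega> 0"
    using convex_cuts continuous_on_closing_gap open_ends edges
    by (intro arg_changes_add_on_contractible[where S = cuts and D = "\<gamma> 1 - \<gamma> 0"
        and F = "\<lambda>p. closing_gap \<sigma> (fst p) (snd p)"
        and p = "\<lambda>t. (0, t)" and q = "\<lambda>t. (t, 1)" and r = "\<lambda>t. (t, t)"])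
      (auto simp: convex_imp_contractible path_def path_image_def pathstart_def pathfinish_def
        cuts_def args intro!: continuous_intros)
  with winding show False ..
qed

lemma closing_gap_transposition_has_zero:
  assumes "(\<sigma> 1, \<sigma> 2, \<sigma> 3) \<in> {(2, 1, 3), (1, 3, 2), (3, 2, 1)}" and "\<theta> 1 \<noteq> \<theta> 0"
  shows "\<exists>(c1, c2) \<in> cuts. closing_gap \<sigma> c1 c2 = 0"
proof -
  note gap_simps =
    closing_gap_def cut_start_def cut_end_def closed_tangent cis_divide[symmetric] field_simps
  from assms(1) consider "\<sigma> 1 = 2" "\<sigma> 2 = 1" "\<sigma> 3 = 3" | "\<sigma> 1 = 1" "\<sigma> 2 = 3" "\<sigma> 3 = 2"
    | "\<sigma> 1 = 3" "\<sigma> 2 = 2" "\<sigma> 3 = 1"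
    by auto
  then show ?thesis
  proof cases
    case 1
    show ?thesis
    proof (rule closing_gap_has_zero[where \<phi> = "\<lambda>t. 0" and \<psi> = "\<lambda>t. 0"
        and \<omega> = "\<lambda>t. \<theta> t - \<theta> 0"])
      fix t :: real
      show "closing_gap \<sigma> 0 t = cis 0 * (\<gamma> 1 - \<gamma> 0)"
        using 1 by (simp add: gap_simps)
      show "closing_gap \<sigma> t 1 = cis 0 * (\<gamma> 1 - \<gamma> 0)"
        using 1 by (simp add: gap_simps)
      show "closing_gap \<sigma> t t = cis (\<theta> t - \<theta> 0) * (\<gamma> 1 - \<gamma> 0)"
        using 1 by (simp add: gap_simps)
    qed (use assms(2) theta_cont in \<open>auto intro: continuous_intros\<close>)
  next
    case 2
    show ?thesis
    proof (rule closing_gap_has_zero[where \<phi> = "\<lambda>t. \<theta> 0 - \<theta> t" and \<psi> = "\<lambda>t. 0"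
        and \<omega> = "\<lambda>t. 0"])
      fix t :: real
      show "closing_gap \<sigma> 0 t = cis (\<theta> 0 - \<theta> t) * (\<gamma> 1 - \<gamma> 0)"
        using 2 by (simp add: gap_simps)
      show "closing_gap \<sigma> t 1 = cis 0 * (\<gamma> 1 - \<gamma> 0)"
        using 2 by (simp add: gap_simps)
      show "closing_gap \<sigma> t t = cis 0 * (\<gamma> 1 - \<gamma> 0)"
        using 2 by (simp add: gap_simps)
    qed (use assms(2) theta_cont in \<open>auto intro: continuous_intros\<close>)
  next
    case 3
    show ?thesis
    proof (rule closing_gap_has_zero[where \<phi> = "\<lambda>t. 0" and \<psi> = "\<lambda>t. \<theta> 0 - \<theta> t"
        and \<omega> = "\<lambda>t. 0"])
      fix t :: real
      show "closing_gap \<sigma> 0 t = cis 0 * (\<gamma> 1 - \<gamma> 0)"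
        using 3 by (simp add: gap_simps)
      show "closing_gap \<sigma> t 1 = cis (\<theta> 0 - \<theta> t) * (\<gamma> 1 - \<gamma> 0)"
        using 3 by (simp add: gap_simps)
      show "closing_gap \<sigma> t t = cis 0 * (\<gamma> 1 - \<gamma> 0)"
        using 3 by (simp add: gap_simps)
    qed (use assms(2) theta_cont in \<open>auto intro: continuous_intros\<close>)
  qed
qed

end

theorem proposition4p4:
  fixes \<gamma> :: "real \<Rightarrow> complex" and \<gamma>' :: "real \<Rightarrow> complex"
    and \<theta> :: "real \<Rightarrow> real" and c :: real and m :: int
    and \<sigma> :: "nat \<Rightarrow> nat"
  assumes deriv: "\<And>s. s \<in> {0..1} \<Longrightarrow> (\<gamma> has_vector_derivative \<gamma>' s) (at s within {0..1})"
    and C1: "continuous_on {0..1} \<gamma>'"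
    and c_pos: "c > 0"
    and speed: "\<And>s. s \<in> {0..1} \<Longrightarrow> norm (\<gamma>' s) = c"
    and ends: "\<gamma> 0 \<noteq> \<gamma> 1"
    and theta_cont: "continuous_on {0..1} \<theta>"
    and theta: "\<And>s. s \<in> {0..1} \<Longrightarrow> \<gamma>' s = complex_of_real c * cis (\<theta> s)"
    and turning: "\<theta> 1 - \<theta> 0 = 2 * pi * real_of_int m"
    and m_nz: "m \<noteq> 0"
    and perm: "\<sigma> permutes {1,2,3}"
  shows "rearrangeable_3_1 \<gamma> \<sigma> \<longleftrightarrow> is_transposition3 \<sigma>"
proof -
  have "cis (\<theta> 1) = cis (\<theta> 0) * cis (2 * pi * real_of_int m)"
    using turning by (simp add: cis_mult algebra_simps)
  then interpret turning_curve \<gamma> \<gamma>' \<theta> c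
    using deriv c_pos theta_cont theta ends by unfold_locales simp_all
  have "\<theta> 1 - \<theta> 0 \<noteq> 0"
    unfolding turning using m_nz by simp
  then have "\<theta> 1 \<noteq> \<theta> 0"
    by simp
  from permutes3_values[OF perm]
  consider (odd) "(\<sigma> 1, \<sigma> 2, \<sigma> 3) \<in> {(2, 1, 3), (1, 3, 2), (3, 2, 1)}"
    | (even) "(\<sigma> 1, \<sigma> 2, \<sigma> 3) \<in> {(1, 2, 3), (2, 3, 1), (3, 1, 2)}"
    by blast
  then show ?thesis
  proof cases
    case odd
    then show ?thesis
      using closing_gap_transposition_has_zero \<open>\<theta> 1 \<noteq> \<theta> 0\<close>
      by (simp add: rearrangeable_iff_closing_gap[OF perm] is_transposition3_iff[OF perm])
  next
    case even
    then show ?thesis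
      using closing_gap_cyclic ends
      by (auto simp: rearrangeable_iff_closing_gap[OF perm] is_transposition3_iff[OF perm])
  qed
qed

end
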